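(* Let $S=(s_{ij})$ and $C=(c_{ij})$ be real symmetric $n\times n$ matrices with spectra (counted with multiplicities) $\sigma(S)=(\lambda_1,\ldots,\lambda_n)$ and $\sigma(C)=(\mu_1,\ldots,\mu_n)$, let $0\le\gamma\le1$, and suppose $|c_{ij}|\le s_{ij}$ for all $1\le i,j\le n$. Then $\tfrac12(S+\gamma C)$ and $\tfrac12(S-\gamma C)$ are symmetric nonnegative matrices, and the $2n\times 2n$ block matrices $M_{\pm\gamma}=(M_{ij,\pm\gamma})_{i,j=1}^n$ with $$M_{ij,\pm\gamma}=\begin{pmatrix}\frac{s_{ij}\pm\gamma c_{ij}}{2} & \frac{s_{ij}\mp\gamma c_{ij}}{2}\\ \frac{s_{ij}\mp\gamma c_{ij}}{2} & \frac{s_{ij}\pm\gamma c_{ij}}{2}\end{pmatrix}$$ are symmetric nonnegative matrices realizing, respectively, the lists $(\lambda_1,\ldots,\lambda_n,\pm\gamma\mu_1,\ldots,\pm\gamma\mu_n)$ (with $+$ for $M_{+\gamma}$ and $-$ for $M_{-\gamma}$).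
   Context: A matrix realizes a list of complex numbers if the list is its spectrum counted with multiplicities. Nonnegative means entrywise nonnegative. *)

theory Defs
  imports "Jordan_Normal_Form.Char_Poly"
begin

text \<open>A square matrix realizes a list of complex numbers if the list is its spectrum
  counted with multiplicities, i.e. its characteristic polynomial (over the complex
  numbers) is the product of the linear factors (x - z) for z in the list.\<close>
definition realizes :: "real mat \<Rightarrow> complex list \<Rightarrow> bool" where
  "realizes A zs \<longleftrightarrow> A \<in> carrier_mat (length zs) (length zs) \<and>
     char_poly (map_mat complex_of_real A) = (\<Prod>z\<leftarrow>zs. [:- z, 1:])"

definition sym_mat :: "real mat \<Rightarrow> bool" where
  "sym_mat A \<longleftrightarrow> square_mat A \<and> transpose_mat A = A"

definition nonneg_mat :: "real mat \<Rightarrow> bool" where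
  "nonneg_mat A \<longleftrightarrow> (\<forall>i < dim_row A. \<forall>j < dim_col A. A $$ (i, j) \<ge> 0)"

text \<open>Taking t = gamma gives M_{+gamma}, t = -gamma gives M_{-gamma}.\<close>
definition block_mat :: "real mat \<Rightarrow> real mat \<Rightarrow> real \<Rightarrow> real mat" where
  "block_mat S C t = mat (2 * dim_row S) (2 * dim_row S)
     (\<lambda>(r, k). let i = r div 2; j = k div 2 in
        if r mod 2 = k mod 2 then (S $$ (i, j) + t * C $$ (i, j)) / 2
        else (S $$ (i, j) - t * C $$ (i, j)) / 2)"

end

theory Submission
  imports Defs
begin

text \<open>Each 2x2 block of M is [[a, b], [b, a]] with a + b = s_ij and a - b = t c_ij. Passing from
  every coordinate pair (x_2i, x_2i+1) to its sum and difference therefore conjugates M into the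
  block diagonal matrix diag(S, t C), so the spectrum of M is that of S followed by t times that
  of C. Nonnegativity of the entries is the inequality |t c| \<le> |c| \<le> s for |t| \<le> 1.\<close>

lemma sum_lessThan_double_pairs:
  "(\<Sum>l<2 * (n::nat). f l) = (\<Sum>j<n. f (2 * j) + f (Suc (2 * j)) :: 'a :: comm_monoid_add)"
  by (induct n) (auto simp: ac_simps)

lemma sum_lessThan_double_halves:
  "(\<Sum>l<2 * (n::nat). f l) = (\<Sum>l<n. f l) + (\<Sum>l<n. f (n + l) :: 'a :: comm_monoid_add)"
proof -
  have "(\<Sum>l<2 * n. f l) = (\<Sum>l<n. f l) + (\<Sum>l\<in>{n..<n + n}. f l)"
    by (simp add: mult_2 atLeast0LessThan[symmetric] sum.atLeastLessThan_concat)
  also have "(\<Sum>l\<in>{n..<n + n}. f l) = (\<Sum>l<n. f (n + l))"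
    using sum.shift_bounds_nat_ivl[of f 0 n n] by (simp add: atLeast0LessThan add.commute)
  finally show ?thesis .
qed

lemma mod_eq_if_less_double: "r < 2 * (n::nat) \<Longrightarrow> r mod n = (if r < n then r else r - n)"
  by (simp add: le_mod_geq)

lemma char_poly_four_block_diag:
  fixes A :: "'a :: idom mat"
  assumes A: "A \<in> carrier_mat n n" and B: "B \<in> carrier_mat m m"
  shows "char_poly (four_block_mat A (0\<^sub>m n m) (0\<^sub>m m n) B) = char_poly A * char_poly B"
proof -
  have "char_poly_matrix (four_block_mat A (0\<^sub>m n m) (0\<^sub>m m n) B) =
      four_block_mat (char_poly_matrix A) (0\<^sub>m n m) (0\<^sub>m m n) (char_poly_matrix B)"
    using A B by (intro eq_matI) (auto simp: char_poly_matrix_def)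
  then show ?thesis
    unfolding char_poly_def using A B
    by (simp add: det_four_block_mat_upper_right_zero[OF char_poly_matrix_closed[OF A] refl])
qed

lemma poly_char_poly_smult:
  fixes A :: "'a :: field mat"
  assumes A: "A \<in> carrier_mat n n"
  shows "poly (char_poly (k \<cdot>\<^sub>m A)) (k * x) = k ^ n * poly (char_poly A) x"
proof -
  have "- char_matrix (k \<cdot>\<^sub>m A) (k * x) = k \<cdot>\<^sub>m (- char_matrix A x)"
    using A by (intro eq_matI) (auto simp: char_matrix_def algebra_simps)
  then show ?thesis
    using A by (simp add: char_poly_matrix[of _ n] carrier_matD[OF char_matrix_closed[OF A]])
qed

lemma prod_list_map_mult_const:
  "(\<Prod>z\<leftarrow>zs. k * f z) = k ^ length zs * (\<Prod>z\<leftarrow>zs. f z :: 'a :: comm_monoid_mult)"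
  by (induct zs) (simp_all add: ac_simps)

lemma char_poly_smult_linear_factors:
  fixes A :: "'a :: field_char_0 mat"
  assumes A: "A \<in> carrier_mat n n" and cp: "char_poly A = (\<Prod>z\<leftarrow>zs. [:- z, 1:])"
  shows "char_poly (k \<cdot>\<^sub>m A) = (\<Prod>z\<leftarrow>zs. [:- (k * z), 1:])"
proof -
  have len: "length zs = n"
    using degree_monic_char_poly[OF A] degree_linear_factors[of uminus zs] by (simp add: cp)
  show ?thesis
  proof (cases "k = 0")
    case True
    then have "k \<cdot>\<^sub>m A = 0\<^sub>m n n"
      using A by (intro eq_matI) auto
    then show ?thesis
      using True len char_poly_upper_triangular[of "0\<^sub>m n n" n]
      by (simp add: upper_triangular_def map_replicate_const)
  next
    case False
    show ?thesis
    proof (rule poly_ext)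
      fix x
      have "poly (char_poly (k \<cdot>\<^sub>m A)) x = k ^ n * poly (char_poly A) (x / k)"
        using poly_char_poly_smult[OF A, of k "x / k"] False by simp
      also have "\<dots> = (\<Prod>z\<leftarrow>zs. k * (x / k - z))"
        by (simp add: cp poly_prod_list o_def prod_list_map_mult_const len)
      also have "\<dots> = (\<Prod>z\<leftarrow>zs. x - k * z)"
        using False by (simp add: algebra_simps)
      finally show "poly (char_poly (k \<cdot>\<^sub>m A)) x = poly (\<Prod>z\<leftarrow>zs. [:- (k * z), 1:]) x"
        by (simp add: poly_prod_list o_def)
    qed
  qed
qed

text \<open>Row i < n of this matrix is e_2i + e_2i+1 and row n + i is e_2i - e_2i+1.\<close>

definition pair_sum_diff_mat :: "nat \<Rightarrow> real mat" where
  "pair_sum_diff_mat n = mat (2 * n) (2 * n)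
     (\<lambda>(r, k). if k div 2 = r mod n then (if r < n \<or> even k then 1 else -1) else 0)"

lemma dim_pair_sum_diff_mat [simp]:
  "dim_row (pair_sum_diff_mat n) = 2 * n" "dim_col (pair_sum_diff_mat n) = 2 * n"
  by (simp_all add: pair_sum_diff_mat_def)

lemma pair_sum_diff_mat_carrier [simp]: "pair_sum_diff_mat n \<in> carrier_mat (2 * n) (2 * n)"
  by (simp add: pair_sum_diff_mat_def)

lemma index_pair_sum_diff_mat_pair:
  assumes "r < 2 * n" and "j < n"
  shows "pair_sum_diff_mat n $$ (r, 2 * j) = (if j = r mod n then 1 else 0)"
    and "pair_sum_diff_mat n $$ (r, Suc (2 * j)) = (if j = r mod n then if r < n then 1 else -1 else 0)"
  using assms by (simp_all add: pair_sum_diff_mat_def)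

lemma mult_pair_sum_diff_mat_left:
  assumes B: "B \<in> carrier_mat (2 * n) m" and r: "r < 2 * n" and k: "k < m"
  shows "(pair_sum_diff_mat n * B) $$ (r, k) =
    B $$ (2 * (r mod n), k) + (if r < n then 1 else -1) * B $$ (Suc (2 * (r mod n)), k)"
proof -
  let ?P = "pair_sum_diff_mat n" and ?i = "r mod n" and ?s = "if r < n then 1 else -1 :: real"
  have "(?P * B) $$ (r, k) = (\<Sum>l<2 * n. ?P $$ (r, l) * B $$ (l, k))"
    using B r k by (simp add: scalar_prod_def atLeast0LessThan)
  also have "\<dots> = (\<Sum>j<n. ?P $$ (r, 2 * j) * B $$ (2 * j, k)
                        + ?P $$ (r, Suc (2 * j)) * B $$ (Suc (2 * j), k))"
    by (rule sum_lessThan_double_pairs)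
  also have "\<dots> = (\<Sum>j<n. if j = ?i then B $$ (2 * j, k) + ?s * B $$ (Suc (2 * j), k) else 0)"
    using r by (intro sum.cong) (auto simp: index_pair_sum_diff_mat_pair)
  also have "\<dots> = B $$ (2 * ?i, k) + ?s * B $$ (Suc (2 * ?i), k)"
    using r by simp
  finally show ?thesis .
qed

lemma mult_pair_sum_diff_mat_right:
  assumes A: "A \<in> carrier_mat m (2 * n)" and r: "r < m" and k: "k < 2 * n"
  shows "(A * pair_sum_diff_mat n) $$ (r, k) =
    A $$ (r, k div 2) + (if even k then 1 else -1) * A $$ (r, n + k div 2)"
proof -
  let ?P = "pair_sum_diff_mat n" and ?j = "k div 2" and ?s = "if even k then 1 else -1 :: real"
  have "(A * ?P) $$ (r, k) = (\<Sum>l<2 * n. A $$ (r, l) * ?P $$ (l, k))"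
    using A r k by (simp add: scalar_prod_def atLeast0LessThan)
  also have "\<dots> = (\<Sum>l<n. A $$ (r, l) * ?P $$ (l, k))
                    + (\<Sum>l<n. A $$ (r, n + l) * ?P $$ (n + l, k))"
    by (rule sum_lessThan_double_halves)
  also have "\<dots> = (\<Sum>l<n. if l = ?j then A $$ (r, l) else 0)
                    + (\<Sum>l<n. if l = ?j then ?s * A $$ (r, n + l) else 0)"
    using k by (intro arg_cong2[where f = "(+)"] sum.cong) (auto simp: pair_sum_diff_mat_def)
  also have "\<dots> = A $$ (r, ?j) + ?s * A $$ (r, n + ?j)"
    using k by simp
  finally show ?thesis .
qed

lemma pair_sum_diff_mat_inverse:
  "pair_sum_diff_mat n * ((1/2) \<cdot>\<^sub>m transpose_mat (pair_sum_diff_mat n)) = 1\<^sub>m (2 * n)"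
proof (rule eq_matI)
  fix r k assume "r < dim_row (1\<^sub>m (2 * n))" and "k < dim_col (1\<^sub>m (2 * n))"
  then have r: "r < 2 * n" and k: "k < 2 * n" by auto
  let ?P = "pair_sum_diff_mat n" and ?s = "\<lambda>r. if r < n then 1 else -1 :: real"
  have i: "r mod n < n"
    using r by simp
  then have i': "Suc (2 * (r mod n)) < 2 * n"
    by simp
  have "(?P * ((1/2) \<cdot>\<^sub>m transpose_mat ?P)) $$ (r, k) =
      (?P $$ (k, 2 * (r mod n)) + ?s r * ?P $$ (k, Suc (2 * (r mod n)))) / 2"
    using r k i i' by (subst mult_pair_sum_diff_mat_left) simp_all
  also have "\<dots> = (if r mod n = k mod n then (1 + ?s r * ?s k) / 2 else 0)"
    using k i by (simp add: index_pair_sum_diff_mat_pair)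
  also have "\<dots> = 1\<^sub>m (2 * n) $$ (r, k)"
    using r k by (auto simp: mod_eq_if_less_double)
  finally show "(?P * ((1/2) \<cdot>\<^sub>m transpose_mat ?P)) $$ (r, k) = 1\<^sub>m (2 * n) $$ (r, k)" .
qed auto

lemma index_block_mat:
  assumes "S \<in> carrier_mat n n" and "r < 2 * n" and "k < 2 * n"
  shows "block_mat S C t $$ (r, k) =
    (if r mod 2 = k mod 2 then (S $$ (r div 2, k div 2) + t * C $$ (r div 2, k div 2)) / 2
     else (S $$ (r div 2, k div 2) - t * C $$ (r div 2, k div 2)) / 2)"
  using assms by (simp add: block_mat_def Let_def)

lemma dim_block_mat [simp]:
  "dim_row (block_mat S C t) = 2 * dim_row S" "dim_col (block_mat S C t) = 2 * dim_row S"
  by (simp_all add: block_mat_def)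

lemma block_mat_carrier [simp]:
  "S \<in> carrier_mat n n \<Longrightarrow> block_mat S C t \<in> carrier_mat (2 * n) (2 * n)"
  by (simp add: block_mat_def)

lemma pair_sum_diff_mat_mult_block_mat:
  assumes S: "S \<in> carrier_mat n n" and C: "C \<in> carrier_mat n n"
  shows "pair_sum_diff_mat n * block_mat S C t =
    four_block_mat S (0\<^sub>m n n) (0\<^sub>m n n) (t \<cdot>\<^sub>m C) * pair_sum_diff_mat n"
    (is "?P * ?M = ?D * ?P")
proof (rule eq_matI)
  have D: "?D \<in> carrier_mat (2 * n) (2 * n)"
    using S C by (simp add: mult_2)
  fix r k assume "r < dim_row (?D * ?P)" and "k < dim_col (?D * ?P)"
  then have r: "r < 2 * n" and k: "k < 2 * n"
    using D by auto
  have i: "r mod n < n" and j: "k div 2 < n"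
    using r k by simp_all
  from i have i': "Suc (2 * (r mod n)) < 2 * n"
    by simp
  have "(?P * ?M) $$ (r, k) =
      ?M $$ (2 * (r mod n), k) + (if r < n then 1 else -1) * ?M $$ (Suc (2 * (r mod n)), k)"
    using S r k by (intro mult_pair_sum_diff_mat_left) auto
  also have "\<dots> = (if r < n then S $$ (r, k div 2)
                     else (if even k then 1 else -1) * (t * C $$ (r - n, k div 2)))"
    using S r k i i' by (auto simp: index_block_mat mod_eq_if_less_double field_simps)
  also have "\<dots> = ?D $$ (r, k div 2) + (if even k then 1 else -1) * ?D $$ (r, n + k div 2)"
    using S C r j by auto
  also have "\<dots> = (?D * ?P) $$ (r, k)"
    using D r k by (intro mult_pair_sum_diff_mat_right[symmetric]) auto
  finally show "(?P * ?M) $$ (r, k) = (?D * ?P) $$ (r, k)" .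
qed (use S C in \<open>simp_all add: mult_2\<close>)

lemma block_mat_similar_four_block:
  assumes S: "S \<in> carrier_mat n n" and C: "C \<in> carrier_mat n n"
  shows "similar_mat (block_mat S C t) (four_block_mat S (0\<^sub>m n n) (0\<^sub>m n n) (t \<cdot>\<^sub>m C))"
proof -
  let ?P = "pair_sum_diff_mat n" and ?Q = "(1/2) \<cdot>\<^sub>m transpose_mat (pair_sum_diff_mat n)"
    and ?M = "block_mat S C t" and ?D = "four_block_mat S (0\<^sub>m n n) (0\<^sub>m n n) (t \<cdot>\<^sub>m C)"
  have D: "?D \<in> carrier_mat (2 * n) (2 * n)"
    using S C by (simp add: mult_2)
  have Q: "?Q \<in> carrier_mat (2 * n) (2 * n)"
    by simp
  have QP: "?Q * ?P = 1\<^sub>m (2 * n)"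
    by (rule mat_mult_left_right_inverse[OF _ Q pair_sum_diff_mat_inverse]) simp
  have "?Q * ?D * ?P = ?Q * (?P * ?M)"
    using assoc_mult_mat[OF Q D pair_sum_diff_mat_carrier]
    by (simp add: pair_sum_diff_mat_mult_block_mat[OF S C])
  also have "\<dots> = ?M"
    using S by (simp add: assoc_mult_mat[OF Q pair_sum_diff_mat_carrier, of _ "2 * n", symmetric] QP)
  finally show ?thesis
    using S D Q QP pair_sum_diff_mat_inverse by (intro similar_matI[of _ _ ?Q ?P "2 * n"]) auto
qed

lemma char_poly_block_mat:
  assumes S: "S \<in> carrier_mat n n" and C: "C \<in> carrier_mat n n"
  shows "char_poly (block_mat S C t) = char_poly S * char_poly (t \<cdot>\<^sub>m C)"
  using char_poly_similar[OF block_mat_similar_four_block[OF S C]]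
    char_poly_four_block_diag[OF S smult_carrier_mat[OF C]] by simp

lemma realizes_block_mat:
  assumes S: "S \<in> carrier_mat n n" and C: "C \<in> carrier_mat n n"
    and "realizes S lam" and "realizes C mu"
  shows "realizes (block_mat S C t) (lam @ map (\<lambda>z. complex_of_real t * z) mu)"
proof -
  interpret of_real_poly: map_poly_comm_ring_hom "of_real :: real \<Rightarrow> complex" ..
  let ?c = "map_mat complex_of_real"
  have "length lam = n" "length mu = n"
    using assms(3,4) carrier_matD(1)[OF S] carrier_matD(1)[OF C]
    unfolding realizes_def by (auto dest: carrier_matD(1))
  then have len: "length (lam @ map (\<lambda>z. complex_of_real t * z) mu) = 2 * n"
    by simp
  have hom_smult: "?c (t \<cdot>\<^sub>m C) = complex_of_real t \<cdot>\<^sub>m ?c C"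
    by (intro eq_matI) auto
  have "char_poly (?c (block_mat S C t)) = char_poly (?c S) * char_poly (?c (t \<cdot>\<^sub>m C))"
    using S C by (simp add: of_real_hom.char_poly_hom[of _ "2 * n"] of_real_hom.char_poly_hom[of _ n]
        char_poly_block_mat of_real_poly.hom_mult)
  also have "\<dots> = (\<Prod>z\<leftarrow>lam @ map (\<lambda>z. complex_of_real t * z) mu. [:- z, 1:])"
    using C assms(3,4) by (simp add: hom_smult realizes_def char_poly_smult_linear_factors[of _ n] o_def)
  finally show ?thesis
    unfolding realizes_def len using block_mat_carrier[OF S] by (intro conjI)
qed

lemma sym_mat_entry:
  assumes "sym_mat A" and "i < dim_row A" and "j < dim_row A"
  shows "A $$ (j, i) = A $$ (i, j)"
proof -
  have "dim_col A = dim_row A" and "transpose_mat A = A"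
    using assms(1) by (simp_all add: sym_mat_def)
  then show ?thesis
    using index_transpose_mat(1)[of i A j] assms(2,3) by simp
qed

lemma sym_mat_add:
  assumes "A \<in> carrier_mat n n" and "B \<in> carrier_mat n n" and "sym_mat A" and "sym_mat B"
  shows "sym_mat (A + B)"
  using assms transpose_add[OF assms(1,2)] by (simp add: sym_mat_def)

lemma transpose_smult_mat: "transpose_mat (k \<cdot>\<^sub>m A) = k \<cdot>\<^sub>m transpose_mat A"
  by (intro eq_matI) auto

lemma sym_mat_smult: "sym_mat A \<Longrightarrow> sym_mat (k \<cdot>\<^sub>m A)"
  unfolding sym_mat_def by (simp add: transpose_smult_mat)

lemma sym_mat_block_mat:
  assumes S: "S \<in> carrier_mat n n" and C: "C \<in> carrier_mat n n"
    and "sym_mat S" and "sym_mat C"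
  shows "sym_mat (block_mat S C t)"
proof -
  have "block_mat S C t $$ (k, r) = block_mat S C t $$ (r, k)" if "r < 2 * n" "k < 2 * n" for r k
    using that S C assms(3,4) by (simp add: index_block_mat sym_mat_entry)
  then show ?thesis
    using S unfolding sym_mat_def by (intro conjI eq_matI) auto
qed

lemma nonneg_add_mult_of_abs_le:
  fixes s c t :: real
  assumes "\<bar>t\<bar> \<le> 1" and "\<bar>c\<bar> \<le> s"
  shows "0 \<le> s + t * c"
proof -
  have "\<bar>t * c\<bar> \<le> \<bar>c\<bar>"
    unfolding abs_mult using assms(1) by (simp add: mult_left_le_one_le)
  then show ?thesis
    using assms(2) by linarith
qed

lemma nonneg_mat_half_sum:
  assumes "S \<in> carrier_mat n n" and "C \<in> carrier_mat n n" and "\<bar>t\<bar> \<le> 1"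
    and "\<forall>i < n. \<forall>j < n. \<bar>C $$ (i, j)\<bar> \<le> S $$ (i, j)"
  shows "nonneg_mat ((1/2) \<cdot>\<^sub>m (S + t \<cdot>\<^sub>m C))"
  using assms by (auto simp: nonneg_mat_def intro: nonneg_add_mult_of_abs_le)

lemma nonneg_mat_block_mat:
  assumes S: "S \<in> carrier_mat n n" and "\<bar>t\<bar> \<le> 1"
    and "\<forall>i < n. \<forall>j < n. \<bar>C $$ (i, j)\<bar> \<le> S $$ (i, j)"
  shows "nonneg_mat (block_mat S C t)"
  unfolding nonneg_mat_def
proof (intro allI impI)
  fix r k assume "r < dim_row (block_mat S C t)" and "k < dim_col (block_mat S C t)"
  then have r: "r < 2 * n" and k: "k < 2 * n"
    using S by auto
  then have "\<bar>C $$ (r div 2, k div 2)\<bar> \<le> S $$ (r div 2, k div 2)"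
    using assms(3) by simp
  then show "0 \<le> block_mat S C t $$ (r, k)"
    using nonneg_add_mult_of_abs_le[of t] nonneg_add_mult_of_abs_le[of "- t"] assms(2) S r k
    by (simp add: index_block_mat)
qed

theorem corollary1:
  fixes S C :: "real mat" and n :: nat and \<gamma> :: real
    and lam mu :: "complex list"
  assumes "S \<in> carrier_mat n n" and "C \<in> carrier_mat n n"
    and "sym_mat S" and "sym_mat C"
    and "realizes S lam" and "realizes C mu"
    and "0 \<le> \<gamma>" and "\<gamma> \<le> 1"
    and "\<forall>i < n. \<forall>j < n. \<bar>C $$ (i, j)\<bar> \<le> S $$ (i, j)"
  shows "sym_mat ((1/2) \<cdot>\<^sub>m (S + \<gamma> \<cdot>\<^sub>m C)) \<and> nonneg_mat ((1/2) \<cdot>\<^sub>m (S + \<gamma> \<cdot>\<^sub>m C))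
       \<and> sym_mat ((1/2) \<cdot>\<^sub>m (S - \<gamma> \<cdot>\<^sub>m C)) \<and> nonneg_mat ((1/2) \<cdot>\<^sub>m (S - \<gamma> \<cdot>\<^sub>m C))
       \<and> sym_mat (block_mat S C \<gamma>) \<and> nonneg_mat (block_mat S C \<gamma>)
       \<and> realizes (block_mat S C \<gamma>) (lam @ map (\<lambda>z. complex_of_real \<gamma> * z) mu)
       \<and> sym_mat (block_mat S C (- \<gamma>)) \<and> nonneg_mat (block_mat S C (- \<gamma>))
       \<and> realizes (block_mat S C (- \<gamma>)) (lam @ map (\<lambda>z. - complex_of_real \<gamma> * z) mu)"
proof -
  have abs_le: "\<bar>\<gamma>\<bar> \<le> 1" "\<bar>- \<gamma>\<bar> \<le> 1"
    using assms(7,8) by auto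
  have minus: "S - \<gamma> \<cdot>\<^sub>m C = S + (- \<gamma>) \<cdot>\<^sub>m C"
    using assms(1,2) by (intro eq_matI) auto
  have "sym_mat ((1/2) \<cdot>\<^sub>m (S + t \<cdot>\<^sub>m C))" for t
    using assms(1-4) by (intro sym_mat_smult sym_mat_add[of _ n]) auto
  then show ?thesis
    unfolding minus
    using abs_le nonneg_mat_half_sum[OF assms(1,2) _ assms(9)]
      sym_mat_block_mat[OF assms(1-4)] nonneg_mat_block_mat[OF assms(1) _ assms(9)]
      realizes_block_mat[OF assms(1,2,5,6), of \<gamma>]
      realizes_block_mat[OF assms(1,2,5,6), of "- \<gamma>"]
    by simp
qed

end
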